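(* Define, for real $f<1$ and real $w$, $$G_0(w,f)=(1-f)\,y\left(\tfrac12-y\right),\qquad y=1-\frac{w}{1-f}$$ (equivalently $G_0(w,f)=\frac{1-f}{\Phi(1-\frac{w}{1-f})}$ with $\Phi(x)=\frac{1}{x(\frac12-x)}$). Then $G_0$ is concave on the region $\{(w,f): f\in[0,\frac12],\ \frac{1-f}{2}\le w\le 1-f\}$; hence for every $n\ge1$ and all $w_i,f_i$ with $f_i\in[0,\frac12]$ and $\frac{1-f_i}{2}\le w_i\le 1-f_i$ ($i=1,\dots,n$), $$\frac{G_0(w_1,f_1)+\cdots+G_0(w_n,f_n)}{n}\le G_0\!\left(\frac{w_1+\cdots+w_n}{n},\frac{f_1+\cdots+f_n}{n}\right).$$ *)

theory Defs
  imports "HOL-Analysis.Analysis"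
begin

definition G0 :: "real \<Rightarrow> real \<Rightarrow> real" where
  "G0 w f = (let y = 1 - w / (1 - f) in (1 - f) * y * (1/2 - y))"

definition G0_region :: "(real \<times> real) set" where
  "G0_region = {(w, f). 0 \<le> f \<and> f \<le> 1/2 \<and> (1 - f) / 2 \<le> w \<and> w \<le> 1 - f}"

end

theory Submission
  imports Defs
begin

text \<open>Away from the line \<open>f = 1\<close>, \<open>G0 w f = 3/2 w - (1 - f)/2 - w\<^sup>2/(1 - f)\<close>: an affine
  function minus the perspective \<open>w\<^sup>2/u\<close> of the square, evaluated at \<open>u = 1 - f\<close>. The
  perspective of a convex function is jointly convex on \<open>u > 0\<close>, so \<open>G0\<close> is concave on the
  half-plane \<open>f < 1\<close>, which contains the region; the averaged inequality is Jensen's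
  inequality with equal weights.\<close>

lemma square_over_linear_convex_combination_le:
  fixes w1 w2 u1 u2 t :: real
  assumes "0 < u1" "0 < u2" "0 \<le> t" "t \<le> 1"
  shows "(t * w1 + (1 - t) * w2)\<^sup>2 / (t * u1 + (1 - t) * u2)
    \<le> t * (w1\<^sup>2 / u1) + (1 - t) * (w2\<^sup>2 / u2)"
proof -
  define u where "u = t * u1 + (1 - t) * u2"
  have "0 < u"
    using assms by (cases "t = 0") (auto simp: u_def intro: add_pos_nonneg)
  have "(t * (w1\<^sup>2 / u1) + (1 - t) * (w2\<^sup>2 / u2)) * u - (t * w1 + (1 - t) * w2)\<^sup>2
      = t * (1 - t) * (w1 * u2 - w2 * u1)\<^sup>2 / (u1 * u2)"
    using assms by (simp add: u_def field_simps power2_eq_square)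
  also have "\<dots> \<ge> 0"
    using assms by simp
  finally show ?thesis
    using \<open>0 < u\<close> by (simp add: u_def pos_divide_le_eq)
qed

lemma convex_on_square_over_linear: "convex_on {(w, u). 0 < u} (\<lambda>(w, u). w\<^sup>2 / u :: real)"
proof (rule convex_onI)
  show "convex {(w, u :: real). 0 < u}"
  proof (rule convexI, clarsimp)
    fix u1 u2 a b :: real
    assume "0 < u1" "0 < u2" "0 \<le> a" "0 \<le> b" "a + b = 1"
    then show "0 < a * u1 + b * u2"
      by (cases "a = 0") (auto intro: add_pos_nonneg)
  qed
next
  fix t :: real and x y :: "real \<times> real"
  assume "0 < t" "t < 1" "x \<in> {(w, u). 0 < u}" "y \<in> {(w, u). 0 < u}"
  then show "(\<lambda>(w, u). w\<^sup>2 / u) ((1 - t) *\<^sub>R x + t *\<^sub>R y)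
      \<le> (1 - t) * (\<lambda>(w, u). w\<^sup>2 / u) x + t * (\<lambda>(w, u). w\<^sup>2 / u) y"
    using square_over_linear_convex_combination_le[of "snd x" "snd y" "1 - t" "fst x" "fst y"]
    by (auto simp: case_prod_beta)
qed

lemma convex_on_compose_affine:
  assumes "convex_on S g" "linear h"
  shows "convex_on {x. h x + c \<in> S} (\<lambda>x. g (h x + c))"
proof -
  have affine: "h (u *\<^sub>R x + v *\<^sub>R y) + c = u *\<^sub>R (h x + c) + v *\<^sub>R (h y + c)"
    if "u + v = 1" for u v :: real and x y
    using that \<open>linear h\<close> by (simp add: linear_add linear_scale scaleR_add_right
        flip: add.assoc scaleR_add_left)
  have "convex {x. h x + c \<in> S}"
  proof (rule convexI)
    fix x y and u v :: real
    assume "x \<in> {x. h x + c \<in> S}" "y \<in> {x. h x + c \<in> S}" "0 \<le> u" "0 \<le> v" "u + v = 1"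
    then show "u *\<^sub>R x + v *\<^sub>R y \<in> {x. h x + c \<in> S}"
      using convexD[OF convex_on_imp_convex[OF assms(1)]] by (simp add: affine)
  qed
  then show ?thesis
    unfolding convex_on_def
  proof (intro conjI ballI allI impI)
    fix x y and u v :: real
    assume "x \<in> {x. h x + c \<in> S}" "y \<in> {x. h x + c \<in> S}" "0 \<le> u" "0 \<le> v" "u + v = 1"
    then show "g (h (u *\<^sub>R x + v *\<^sub>R y) + c) \<le> u * g (h x + c) + v * g (h y + c)"
      using assms(1) by (simp add: affine convex_on_def)
  qed
qed

lemma concave_on_cong:
  assumes "concave_on S f" "\<And>x. x \<in> S \<Longrightarrow> f x = g x"
  shows "concave_on S g"
  using assms convexD[OF concave_on_imp_convex[OF assms(1)]] by (simp add: concave_on_iff)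

lemma concave_on_average_le:
  assumes "concave_on C g" "finite I" "I \<noteq> {}" "\<And>i. i \<in> I \<Longrightarrow> x i \<in> C"
  shows "(\<Sum>i\<in>I. g (x i)) / card I \<le> g ((1 / card I) *\<^sub>R (\<Sum>i\<in>I. x i))"
proof -
  have "(\<Sum>i\<in>I. 1 / card I :: real) = 1"
    using assms(2,3) by simp
  then have "(\<Sum>i\<in>I. (1 / card I) * g (x i)) \<le> g (\<Sum>i\<in>I. (1 / card I) *\<^sub>R x i)"
    using assms by (intro concave_on_sum) auto
  then show ?thesis
    by (simp add: sum_divide_distrib scaleR_sum_right)
qed

lemma G0_eq:
  assumes "f \<noteq> 1"
  shows "G0 w f = 3/2 * w - (1 - f) / 2 - w\<^sup>2 / (1 - f)"
proof -
  define u where "u = 1 - f"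
  have "u \<noteq> 0"
    using assms by (simp add: u_def)
  have "G0 w f = (u - w) * (w / u - 1/2)"
    using \<open>u \<noteq> 0\<close> by (simp add: G0_def u_def[symmetric] algebra_simps diff_divide_distrib)
  also have "\<dots> = 3/2 * w - u / 2 - w\<^sup>2 / u"
    using \<open>u \<noteq> 0\<close> by (simp add: algebra_simps power2_eq_square diff_divide_distrib)
  finally show ?thesis
    by (simp add: u_def)
qed

lemma concave_on_G0: "concave_on {(w, f). f < 1} (\<lambda>(w, f). G0 w f)"
proof -
  have square_over: "convex_on {(w, f). f < 1} (\<lambda>(w, f). w\<^sup>2 / (1 - f))"
    using convex_on_compose_affine[OF convex_on_square_over_linear, of "\<lambda>(w, f). (w, - f)" "(0, 1)"]
    by (simp add: linear_iff split_def algebra_simps)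
  have "concave_on {(w, f). f < 1} (\<lambda>(w, f). 3/2 * w - (1 - f) / 2)"
    using convex_on_imp_convex[OF square_over]
    by (auto simp: concave_on_iff field_simps)
  from concave_on_diff[OF this square_over] show ?thesis
    by (rule concave_on_cong) (auto simp: G0_eq)
qed

lemma convex_G0_region: "convex G0_region"
proof -
  have "G0_region = {x. inner (0, -1) x \<le> 0} \<inter> {x. inner (0, 1) x \<le> 1/2}
      \<inter> {x. inner (-1, -1/2) x \<le> -1/2} \<inter> {x. inner (1, 1) x \<le> (1 :: real)}"
    by (auto simp: G0_region_def inner_Pair field_simps)
  then show ?thesis
    by (metis convex_Int convex_halfspace_le)
qed

theorem lemma17:
  shows "concave_on G0_region (\<lambda>(w, f). G0 w f)
    \<and> (\<forall>(n::nat) (w::nat \<Rightarrow> real) (f::nat \<Rightarrow> real).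
         n \<ge> 1 \<longrightarrow>
         (\<forall>i\<in>{1..n}. 0 \<le> f i \<and> f i \<le> 1/2 \<and> (1 - f i) / 2 \<le> w i \<and> w i \<le> 1 - f i) \<longrightarrow>
         (\<Sum>i=1..n. G0 (w i) (f i)) / real n
           \<le> G0 ((\<Sum>i=1..n. w i) / real n) ((\<Sum>i=1..n. f i) / real n))"
proof (intro conjI allI impI)
  have "G0_region \<subseteq> {(w, f). f < 1}"
    by (auto simp: G0_region_def)
  then show concave: "concave_on G0_region (\<lambda>(w, f). G0 w f)"
    using concave_on_G0 convex_G0_region by (simp add: concave_on_def convex_on_subset)
  fix n :: nat and w f :: "nat \<Rightarrow> real"
  assume "n \<ge> 1" "\<forall>i\<in>{1..n}. 0 \<le> f i \<and> f i \<le> 1/2 \<and> (1 - f i) / 2 \<le> w i \<and> w i \<le> 1 - f i"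
  then have jensen: "(\<Sum>i=1..n. G0 (w i) (f i)) / card {1..n}
      \<le> (\<lambda>(w, f). G0 w f) ((1 / card {1..n}) *\<^sub>R (\<Sum>i=1..n. (w i, f i)))"
    using concave_on_average_le[OF concave, of "{1..n}" "\<lambda>i. (w i, f i)"]
    by (auto simp: G0_region_def)
  have average: "(1 / card {1..n}) *\<^sub>R (\<Sum>i=1..n. (w i, f i))
      = ((\<Sum>i=1..n. w i) / real n, (\<Sum>i=1..n. f i) / real n)"
    by (simp add: prod_eq_iff fst_sum snd_sum)
  show "(\<Sum>i=1..n. G0 (w i) (f i)) / real n
      \<le> G0 ((\<Sum>i=1..n. w i) / real n) ((\<Sum>i=1..n. f i) / real n)"
    using jensen unfolding average by simp
qed

end
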